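(* Let $1\le k\le n-1$ and let $\Sigma=\mathbb{S}^k\times\mathbb{R}^{n-k}\subset\mathbb{R}^{n+1}$ be a self-shrinker, with Euclidean coordinates $\vec x=(x_{k+1},\dots,x_n)$ on the $\mathbb{R}^{n-k}$ factor (and $x_n$ any one of these linear coordinates). Then the following subsets of $\Sigma$ are stable: (1) $\{x_n>\sqrt2\}$; (2) $\{|x_n|<\sqrt2\}$; (3) $\{x_n<-\sqrt2\}$; (4) $\{|\vec x|>\sqrt{2(n-k)}\}$; (5) $\{|\vec x|<\sqrt{2(n-k)}\}$.
   Context: $\mathbb{S}^k$ is the round sphere of radius $\sqrt{2k}$ centered at the origin of $\mathbb{R}^{k+1}$. Stability operator: $Lf=\Delta f-\tfrac12\langle\vec x,\nabla f\rangle+(|A|^2+\tfrac12)f$. A region $\Omega$ is stable if there is a function $u$ with $Lu=0$ and $u>0$ on $\Omega$. *)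

theory Defs
  imports "HOL-Analysis.Analysis"
begin

text \<open>Ambient space R^{n+1} = 'a \<times> 'b with 'a = R^{k+1} (sphere factor) and
  'b = R^{n-k} (flat factor).  So k = DIM('a) - 1 and n - k = DIM('b).\<close>

definition sph_dim :: "'a::euclidean_space itself \<Rightarrow> nat" where
  "sph_dim _ = DIM('a) - 1"

definition sph_radius :: "'a::euclidean_space itself \<Rightarrow> real" where
  "sph_radius T = sqrt (2 * real (sph_dim T))"

definition cyl_shrinker :: "('a::euclidean_space \<times> 'b::euclidean_space) set" where
  "cyl_shrinker = {z. norm (fst z) = sph_radius TYPE('a)}"

text \<open>Geometric data of Sigma: outward unit normal, scalar mean curvature H
  (mean curvature vector = - H nu), and |A|^2 (k principal curvatures 1/R).\<close>
definition cyl_normal :: "('a::euclidean_space \<times> 'b::euclidean_space) \<Rightarrow> 'a \<times> 'b" where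
  "cyl_normal z = (fst z /\<^sub>R sph_radius TYPE('a), 0)"

definition cyl_H :: "('a::euclidean_space \<times> 'b::euclidean_space) itself \<Rightarrow> real" where
  "cyl_H _ = real (sph_dim TYPE('a)) / sph_radius TYPE('a)"

definition cyl_Asq :: "('a::euclidean_space \<times> 'b::euclidean_space) itself \<Rightarrow> real" where
  "cyl_Asq _ = real (sph_dim TYPE('a)) / (sph_radius TYPE('a))\<^sup>2"

text \<open>For a C^2 ambient function u with derivative Du and second derivative D2u,
  the Laplace-Beltrami operator of the hypersurface Sigma at a point z of Sigma:
  Delta_Sigma u = Delta u - D^2u(nu,nu) - H <grad u, nu>.\<close>
definition cyl_laplacian ::
  "(('a::euclidean_space \<times> 'b::euclidean_space) \<Rightarrow> ('a \<times> 'b) \<Rightarrow>\<^sub>L real)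
   \<Rightarrow> (('a \<times> 'b) \<Rightarrow> ('a \<times> 'b) \<Rightarrow>\<^sub>L (('a \<times> 'b) \<Rightarrow>\<^sub>L real))
   \<Rightarrow> ('a \<times> 'b) \<Rightarrow> real" where
  "cyl_laplacian Du D2u z =
     (\<Sum>e\<in>Basis. blinfun_apply (blinfun_apply (D2u z) e) e)
     - blinfun_apply (blinfun_apply (D2u z) (cyl_normal z)) (cyl_normal z)
     - cyl_H TYPE('a \<times> 'b) * blinfun_apply (Du z) (cyl_normal z)"

text \<open><x, grad_Sigma u> = <x, grad u> - <x, nu> <grad u, nu>.\<close>
definition cyl_pos_grad ::
  "(('a::euclidean_space \<times> 'b::euclidean_space) \<Rightarrow> ('a \<times> 'b) \<Rightarrow>\<^sub>L real) \<Rightarrow> ('a \<times> 'b) \<Rightarrow> real" where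
  "cyl_pos_grad Du z = blinfun_apply (Du z) z - (z \<bullet> cyl_normal z) * blinfun_apply (Du z) (cyl_normal z)"

definition cyl_L ::
  "(('a::euclidean_space \<times> 'b::euclidean_space) \<Rightarrow> real)
   \<Rightarrow> (('a \<times> 'b) \<Rightarrow> ('a \<times> 'b) \<Rightarrow>\<^sub>L real)
   \<Rightarrow> (('a \<times> 'b) \<Rightarrow> ('a \<times> 'b) \<Rightarrow>\<^sub>L (('a \<times> 'b) \<Rightarrow>\<^sub>L real))
   \<Rightarrow> ('a \<times> 'b) \<Rightarrow> real" where
  "cyl_L u Du D2u z = cyl_laplacian Du D2u z - (1/2) * cyl_pos_grad Du z
      + (cyl_Asq TYPE('a \<times> 'b) + 1/2) * u z"

text \<open>A region Omega of Sigma is stable if there is a (C^2) function u with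
  L u = 0 and u > 0 on Omega.  u is taken as a C^2 function on an open
  ambient neighbourhood of Omega (its Sigma-derivatives only depend on u|Sigma).\<close>
definition cyl_stable :: "('a::euclidean_space \<times> 'b::euclidean_space) set \<Rightarrow> bool" where
  "cyl_stable \<Omega> \<longleftrightarrow> \<Omega> \<subseteq> cyl_shrinker \<and>
     (\<exists>u Du D2u S. open S \<and> \<Omega> \<subseteq> S \<and>
        (\<forall>z\<in>S. (u has_derivative blinfun_apply (Du z)) (at z)) \<and>
        (\<forall>z\<in>S. (Du has_derivative blinfun_apply (D2u z)) (at z)) \<and>
        continuous_on S D2u \<and>
        (\<forall>z\<in>\<Omega>. cyl_L u Du D2u z = 0 \<and> u z > 0))"

end

theory Submission
  imports Defs
begin

text \<open>On \<open>\<Sigma>\<close> one has \<open>|A|\<^sup>2 = 1/2\<close>, and a function of the flat coordinates \<open>y\<close> alone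
  does not see the normal direction, so \<open>L\<close> acts on it as the Ornstein-Uhlenbeck operator
  \<open>\<Delta> - y\<cdot>\<nabla>/2 + 1\<close> of \<open>\<real>\<^sup>n\<^sup>-\<^sup>k\<close>. The quadratic Hermite polynomials
  \<open>\<Sum>\<^sub>w (y\<cdot>w)\<^sup>2 - 2|w|\<^sup>2\<close> are eigenfunctions of \<open>\<Delta> - y\<cdot>\<nabla>/2\<close> with eigenvalue \<open>-1\<close>,
  hence are annihilated by \<open>L\<close>. Taking \<open>w = e\<^sub>n\<close> gives \<open>x\<^sub>n\<^sup>2 - 2\<close> and taking all basis
  vectors gives \<open>|y|\<^sup>2 - 2(n-k)\<close>; on each of the five regions one of these functions, or
  its negative, is positive.\<close>

lemma sum_Basis_prod:
  fixes f :: "'a::euclidean_space \<times> 'b::euclidean_space \<Rightarrow> 'c::comm_monoid_add"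
  shows "sum f Basis = (\<Sum>i\<in>Basis. f (i, 0)) + (\<Sum>i\<in>Basis. f (0, i))"
proof -
  have "inj_on (\<lambda>u. (u::'a, 0::'b)) Basis" "inj_on (\<lambda>u. (0::'a, u::'b)) Basis"
    by (auto intro!: inj_onI)
  then show ?thesis
    unfolding Basis_prod_def by (subst sum.union_disjoint) (auto simp: sum.reindex)
qed

lemma sum_Basis_prod_snd_inner_sq:
  "(\<Sum>e\<in>(Basis :: ('a::euclidean_space \<times> 'b::euclidean_space) set). (snd e \<bullet> w)\<^sup>2) = w \<bullet> w"
proof -
  have "(\<Sum>e\<in>(Basis :: ('a \<times> 'b) set). (snd e \<bullet> w)\<^sup>2) = (\<Sum>i\<in>Basis. (w \<bullet> i) * (w \<bullet> i))"
    by (simp add: sum_Basis_prod power2_eq_square inner_commute)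
  also have "\<dots> = w \<bullet> w"
    by (rule euclidean_inner[symmetric])
  finally show ?thesis .
qed

definition hermite_quadratic :: "'b::euclidean_space set \<Rightarrow> 'b \<Rightarrow> real" where
  "hermite_quadratic W y = (\<Sum>w\<in>W. (y \<bullet> w)\<^sup>2 - 2 * (w \<bullet> w))"

definition hermite_gradient :: "'b::euclidean_space set \<Rightarrow> 'b \<Rightarrow> 'b" where
  "hermite_gradient W y = (\<Sum>w\<in>W. (2 * (y \<bullet> w)) *\<^sub>R w)"

lemma hermite_quadratic_has_derivative:
  "(hermite_quadratic W has_derivative (\<lambda>v. v \<bullet> hermite_gradient W y)) (at y)"
  unfolding hermite_quadratic_def hermite_gradient_def
  by (auto intro!: derivative_eq_intros simp: inner_sum_right power2_eq_square algebra_simps)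

lemma linear_hermite_gradient: "linear (hermite_gradient W)"
  by (auto simp: linear_iff hermite_gradient_def inner_add_left scaleR_add_left sum.distrib
      scaleR_sum_right sum_distrib_left algebra_simps)

lemma inner_hermite_gradient: "y \<bullet> hermite_gradient W y = 2 * (\<Sum>w\<in>W. (y \<bullet> w)\<^sup>2)"
  by (simp add: hermite_gradient_def inner_sum_right power2_eq_square sum_distrib_left mult.assoc)

lemma trace_hermite_gradient:
  "(\<Sum>e\<in>(Basis :: ('a::euclidean_space \<times> 'b::euclidean_space) set). snd e \<bullet> hermite_gradient W (snd e))
     = 2 * (\<Sum>w\<in>W. w \<bullet> w)"
proof -
  have "(\<Sum>e\<in>(Basis :: ('a \<times> 'b) set). snd e \<bullet> hermite_gradient W (snd e))
      = 2 * (\<Sum>e\<in>(Basis :: ('a \<times> 'b) set). \<Sum>w\<in>W. (snd e \<bullet> w)\<^sup>2)"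
    by (simp add: inner_hermite_gradient sum_distrib_left)
  also have "\<dots> = 2 * (\<Sum>w\<in>W. w \<bullet> w)"
    by (subst sum.swap) (simp add: sum_Basis_prod_snd_inner_sq)
  finally show ?thesis .
qed

lemma cyl_Asq_eq_half:
  assumes "DIM('a::euclidean_space) \<ge> 2"
  shows "cyl_Asq TYPE('a \<times> 'b::euclidean_space) = 1/2"
  using assms unfolding cyl_Asq_def sph_radius_def sph_dim_def by simp

definition hermite_derivative ::
  "real \<Rightarrow> 'b::euclidean_space set \<Rightarrow> 'a::euclidean_space \<times> 'b \<Rightarrow> ('a \<times> 'b) \<Rightarrow>\<^sub>L real" where
  "hermite_derivative c W z = blinfun_inner_left (0, c *\<^sub>R hermite_gradient W (snd z))"

lemma hermite_derivative_apply:
  "blinfun_apply (hermite_derivative c W z) v = c * (snd v \<bullet> hermite_gradient W (snd z))"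
  by (simp add: hermite_derivative_def inner_prod_def)

lemma bounded_linear_hermite_derivative: "bounded_linear (hermite_derivative c W)"
proof -
  have "linear (\<lambda>z :: 'a::euclidean_space \<times> 'b::euclidean_space. (0::'a, c *\<^sub>R hermite_gradient W (snd z)))"
    using linear_hermite_gradient[of W] by (simp add: linear_iff scaleR_add_right)
  then show ?thesis
    unfolding hermite_derivative_def
    by (auto intro: bounded_linear_compose[OF bounded_linear_blinfun_inner_left]
        simp: linear_conv_bounded_linear)
qed

lemma cyl_L_hermite_quadratic:
  assumes "DIM('a::euclidean_space) \<ge> 2"
  shows "cyl_L (\<lambda>z. c * hermite_quadratic W (snd z)) (hermite_derivative c W)
           (\<lambda>_. Blinfun (hermite_derivative c W)) (z :: 'a \<times> 'b::euclidean_space) = 0"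
proof -
  let ?Du = "hermite_derivative c W :: 'a \<times> 'b \<Rightarrow> ('a \<times> 'b) \<Rightarrow>\<^sub>L real"
  have hessian: "blinfun_apply (Blinfun ?Du) = ?Du"
    by (rule bounded_linear_Blinfun_apply[OF bounded_linear_hermite_derivative])
  have laplacian: "(\<Sum>e\<in>Basis. blinfun_apply (blinfun_apply (Blinfun ?Du) e) e) = c * (2 * (\<Sum>w\<in>W. w \<bullet> w))"
  proof -
    have "(\<Sum>e\<in>Basis. blinfun_apply (blinfun_apply (Blinfun ?Du) e) e)
        = (\<Sum>e\<in>(Basis :: ('a \<times> 'b) set). c * (snd e \<bullet> hermite_gradient W (snd e)))"
      by (simp add: hessian hermite_derivative_apply)
    then show ?thesis
      by (simp add: trace_hermite_gradient flip: sum_distrib_left)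
  qed
  have radial: "blinfun_apply (?Du z) z = 2 * c * (\<Sum>w\<in>W. (snd z \<bullet> w)\<^sup>2)"
    by (simp add: hermite_derivative_apply inner_hermite_gradient)
  have normal: "blinfun_apply (?Du x) (cyl_normal z) = 0" for x
    by (simp add: hermite_derivative_apply cyl_normal_def)
  have quadratic: "hermite_quadratic W (snd z) = (\<Sum>w\<in>W. (snd z \<bullet> w)\<^sup>2) - 2 * (\<Sum>w\<in>W. w \<bullet> w)"
    by (simp add: hermite_quadratic_def sum_subtractf sum_distrib_left)
  show ?thesis
    unfolding cyl_L_def cyl_laplacian_def cyl_pos_grad_def laplacian radial quadratic
    unfolding hessian normal cyl_Asq_eq_half[OF assms]
    by (simp only: ring_distribs)
qed

text \<open>A linear gradient has a constant Hessian, namely \<open>Blinfun Du\<close> itself.\<close>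

lemma cyl_stableI_linear_derivative:
  fixes u :: "'a::euclidean_space \<times> 'b::euclidean_space \<Rightarrow> real"
  assumes "\<Omega> \<subseteq> cyl_shrinker" "bounded_linear Du"
    and "\<And>z. (u has_derivative blinfun_apply (Du z)) (at z)"
    and "\<And>z. z \<in> \<Omega> \<Longrightarrow> cyl_L u Du (\<lambda>_. Blinfun Du) z = 0 \<and> u z > 0"
  shows "cyl_stable \<Omega>"
  unfolding cyl_stable_def
  using assms
  by (intro conjI exI[of _ u] exI[of _ Du] exI[of _ "\<lambda>_. Blinfun Du"] exI[of _ UNIV])
    (auto simp: bounded_linear_Blinfun_apply intro: bounded_linear_imp_has_derivative)

lemma cyl_stable_hermite_quadratic:
  assumes "DIM('a::euclidean_space) \<ge> 2" "\<Omega> \<subseteq> cyl_shrinker"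
    and "\<And>z. z \<in> \<Omega> \<Longrightarrow> c * hermite_quadratic W (snd z) > 0"
  shows "cyl_stable (\<Omega> :: ('a \<times> 'b::euclidean_space) set)"
proof (rule cyl_stableI_linear_derivative[OF assms(2) bounded_linear_hermite_derivative])
  fix z :: "'a \<times> 'b"
  have "((\<lambda>z. hermite_quadratic W (snd z)) has_derivative (\<lambda>v. snd v \<bullet> hermite_gradient W (snd z))) (at z)"
    by (rule has_derivative_compose[OF bounded_linear_imp_has_derivative[OF bounded_linear_snd]
          hermite_quadratic_has_derivative])
  then show "((\<lambda>z. c * hermite_quadratic W (snd z)) has_derivative blinfun_apply (hermite_derivative c W z)) (at z)"
    unfolding hermite_derivative_apply by (rule has_derivative_mult_right)
  show "z \<in> \<Omega> \<Longrightarrow> cyl_L (\<lambda>z. c * hermite_quadratic W (snd z)) (hermite_derivative c W)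
          (\<lambda>_. Blinfun (hermite_derivative c W)) z = 0 \<and> c * hermite_quadratic W (snd z) > 0"
    using cyl_L_hermite_quadratic[OF assms(1)] assms(3) by blast
qed

lemma hermite_quadratic_unit:
  assumes "b \<in> Basis"
  shows "hermite_quadratic {b} y = (y \<bullet> b)\<^sup>2 - 2"
  using assms by (simp add: hermite_quadratic_def)

lemma hermite_quadratic_Basis:
  "hermite_quadratic (Basis :: 'b::euclidean_space set) y = (norm y)\<^sup>2 - 2 * real DIM('b)"
proof -
  have "(\<Sum>w\<in>(Basis :: 'b set). 2 * (w \<bullet> w)) = 2 * real DIM('b)"
    by simp
  then have "hermite_quadratic (Basis :: 'b set) y = (\<Sum>w\<in>Basis. (y \<bullet> w) * (y \<bullet> w)) - 2 * real DIM('b)"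
    by (simp add: hermite_quadratic_def sum_subtractf power2_eq_square)
  also have "\<dots> = (norm y)\<^sup>2 - 2 * real DIM('b)"
    by (simp only: euclidean_inner[symmetric] power2_norm_eq_inner)
  finally show ?thesis .
qed

lemma sqrt_less_abs_iff: "sqrt a < \<bar>x\<bar> \<longleftrightarrow> a < x\<^sup>2"
  by (metis real_sqrt_abs real_sqrt_less_iff)

lemma abs_less_sqrt_iff: "\<bar>x\<bar> < sqrt a \<longleftrightarrow> x\<^sup>2 < a"
  by (metis real_sqrt_abs real_sqrt_less_iff)

theorem proposition4p5:
  fixes b :: "'b::euclidean_space"
  assumes "DIM('a::euclidean_space) \<ge> 2"
    and "b \<in> Basis"
  shows "cyl_stable {z :: 'a \<times> 'b. z \<in> cyl_shrinker \<and> snd z \<bullet> b > sqrt 2} \<and>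
         cyl_stable {z :: 'a \<times> 'b. z \<in> cyl_shrinker \<and> \<bar>snd z \<bullet> b\<bar> < sqrt 2} \<and>
         cyl_stable {z :: 'a \<times> 'b. z \<in> cyl_shrinker \<and> snd z \<bullet> b < - sqrt 2} \<and>
         cyl_stable {z :: 'a \<times> 'b. z \<in> cyl_shrinker \<and> norm (snd z) > sqrt (2 * real DIM('b))} \<and>
         cyl_stable {z :: 'a \<times> 'b. z \<in> cyl_shrinker \<and> norm (snd z) < sqrt (2 * real DIM('b))}"
proof (intro conjI)
  note unit = cyl_stable_hermite_quadratic[OF assms(1), where W = "{b}", unfolded hermite_quadratic_unit[OF assms(2)]]
  note radial = cyl_stable_hermite_quadratic[OF assms(1), where W = Basis, unfolded hermite_quadratic_Basis]
  show "cyl_stable {z :: 'a \<times> 'b. z \<in> cyl_shrinker \<and> snd z \<bullet> b > sqrt 2}"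
    by (rule unit[where c = 1]) (auto simp flip: sqrt_less_abs_iff)
  show "cyl_stable {z :: 'a \<times> 'b. z \<in> cyl_shrinker \<and> \<bar>snd z \<bullet> b\<bar> < sqrt 2}"
    by (rule unit[where c = "-1"]) (auto simp: abs_less_sqrt_iff)
  show "cyl_stable {z :: 'a \<times> 'b. z \<in> cyl_shrinker \<and> snd z \<bullet> b < - sqrt 2}"
    by (rule unit[where c = 1]) (auto simp flip: sqrt_less_abs_iff)
  show "cyl_stable {z :: 'a \<times> 'b. z \<in> cyl_shrinker \<and> norm (snd z) > sqrt (2 * real DIM('b))}"
    by (rule radial[where c = 1]) (auto simp flip: sqrt_less_abs_iff)
  show "cyl_stable {z :: 'a \<times> 'b. z \<in> cyl_shrinker \<and> norm (snd z) < sqrt (2 * real DIM('b))}"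
    by (rule radial[where c = "-1"]) (auto simp flip: abs_less_sqrt_iff)
qed

end
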